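(* Let $(V_1, V_2)$ be an isometric pair such that $\dim E_1 < \infty$ and $[V_2^*, V_1]$ has finite rank. Then $C(V_1, V_2)$ has finite rank.
   Context: All Hilbert spaces are complex and separable. An isometric pair is a pair $(V_1,V_2)$ of commuting isometries. $[V_2^*,V_1] := V_2^*V_1 - V_1V_2^*$. $C(V_1,V_2) := I - V_1V_1^* - V_2V_2^* + V_1V_2V_1^*V_2^*$ and $E_1 := \ker(C(V_1,V_2)-I)$. *)

theory Defs
  imports "HOL-Analysis.Analysis"
begin

class complex_hilbert = banach +
  fixes scaleC :: "complex \<Rightarrow> 'a \<Rightarrow> 'a" (infixr \<open>*\<^sub>C\<close> 75)
    and cinner :: "'a \<Rightarrow> 'a \<Rightarrow> complex"
  assumes scaleC_add_right: "a *\<^sub>C (x + y) = a *\<^sub>C x + a *\<^sub>C y"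
    and scaleC_add_left: "(a + b) *\<^sub>C x = a *\<^sub>C x + b *\<^sub>C x"
    and scaleC_scaleC: "a *\<^sub>C (b *\<^sub>C x) = (a * b) *\<^sub>C x"
    and scaleC_one: "1 *\<^sub>C x = x"
    and scaleR_scaleC: "scaleR r x = complex_of_real r *\<^sub>C x"
    and cinner_conj: "cinner x y = cnj (cinner y x)"
    and cinner_add_right: "cinner x (y + z) = cinner x y + cinner x z"
    and cinner_scaleC_right: "cinner x (a *\<^sub>C y) = a * cinner x y"
    and cinner_self: "cinner x x = complex_of_real ((norm x)\<^sup>2)"

definition separable_space :: "'a::complex_hilbert itself \<Rightarrow> bool" where
  "separable_space _ \<longleftrightarrow> (\<exists>D::'a set. countable D \<and> closure D = UNIV)"

definition clinear_op :: "('a::complex_hilbert \<Rightarrow> 'a) \<Rightarrow> bool" where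
  "clinear_op T \<longleftrightarrow> (\<forall>x y. T (x + y) = T x + T y) \<and> (\<forall>a x. T (a *\<^sub>C x) = a *\<^sub>C T x)"

definition bounded_op :: "('a::complex_hilbert \<Rightarrow> 'a) \<Rightarrow> bool" where
  "bounded_op T \<longleftrightarrow> clinear_op T \<and> (\<exists>K. \<forall>x. norm (T x) \<le> K * norm x)"

definition isometry :: "('a::complex_hilbert \<Rightarrow> 'a) \<Rightarrow> bool" where
  "isometry V \<longleftrightarrow> clinear_op V \<and> (\<forall>x. norm (V x) = norm x)"

definition is_adjoint :: "('a::complex_hilbert \<Rightarrow> 'a) \<Rightarrow> ('a \<Rightarrow> 'a) \<Rightarrow> bool" where
  "is_adjoint T S \<longleftrightarrow> (\<forall>x y. cinner (T x) y = cinner x (S y))"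

definition finite_dim :: "'a::complex_hilbert set \<Rightarrow> bool" where
  "finite_dim A \<longleftrightarrow> (\<exists>F. finite F \<and> (\<forall>v\<in>A. \<exists>c. v = (\<Sum>f\<in>F. c f *\<^sub>C f)))"

definition finite_rank :: "('a::complex_hilbert \<Rightarrow> 'a) \<Rightarrow> bool" where
  "finite_rank T \<longleftrightarrow> finite_dim (range T)"

definition isometric_pair :: "('a::complex_hilbert \<Rightarrow> 'a) \<Rightarrow> ('a \<Rightarrow> 'a) \<Rightarrow> bool" where
  "isometric_pair V1 V2 \<longleftrightarrow> isometry V1 \<and> isometry V2 \<and> V1 \<circ> V2 = V2 \<circ> V1"

definition defect_op :: "('a::complex_hilbert \<Rightarrow> 'a) \<Rightarrow> ('a \<Rightarrow> 'a) \<Rightarrow> ('a \<Rightarrow> 'a) \<Rightarrow> ('a \<Rightarrow> 'a) \<Rightarrow> 'a \<Rightarrow> 'a" where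
  "defect_op V1 V2 V1s V2s = (\<lambda>x. x - V1 (V1s x) - V2 (V2s x) + V1 (V2 (V1s (V2s x))))"

definition cross_comm :: "('a::complex_hilbert \<Rightarrow> 'a) \<Rightarrow> ('a \<Rightarrow> 'a) \<Rightarrow> 'a \<Rightarrow> 'a" where
  "cross_comm V2s V1 = (\<lambda>x. V2s (V1 x) - V1 (V2s x))"

end

theory Submission
  imports Defs
begin

text \<open>Write \<open>Q = I - V1 V1*\<close> and \<open>D = [V2*, V1]\<close>, so that \<open>D* = [V1*, V2]\<close>. Using only
  \<open>V1* V1 = V2* V2 = I\<close> and the commutation of \<open>V1, V2\<close> (hence of \<open>V1*, V2*\<close>), one computes
  \<open>C\<^sup>2 - C = V1 D* Q V2* + V2 Q D V1*\<close>. The adjoint of a finite-rank operator has finite rank,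
  so \<open>(C - I) C\<close> has finite rank. Its range is spanned by the images under \<open>C - I\<close> of
  finitely many vectors \<open>C x\<^sub>i\<close>, hence the range of \<open>C\<close> lies in \<open>ker (C - I) + span {C x\<^sub>i}\<close>,
  which is finite-dimensional because \<open>ker (C - I) = E\<^sub>1\<close> is.\<close>

global_interpretation cvs: vector_space "scaleC :: complex \<Rightarrow> 'a \<Rightarrow> 'a::complex_hilbert"
  by unfold_locales (simp_all add: scaleC_add_right scaleC_add_left scaleC_scaleC scaleC_one)

global_interpretation cvs: vector_space_pair
  "scaleC :: complex \<Rightarrow> 'a \<Rightarrow> 'a::complex_hilbert" "scaleC :: complex \<Rightarrow> 'a \<Rightarrow> 'a" ..

abbreviation clinear :: "('a::complex_hilbert \<Rightarrow> 'a) \<Rightarrow> bool" where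
  "clinear \<equiv> Vector_Spaces.linear (*\<^sub>C) (*\<^sub>C)"

lemma clinear_op_iff_clinear: "clinear_op T \<longleftrightarrow> clinear T"
  by (simp add: clinear_op_def Vector_Spaces.linear_iff cvs.vector_space_axioms)

lemma clinear_compose: "clinear f \<Longrightarrow> clinear g \<Longrightarrow> clinear (\<lambda>x. f (g x))"
  using Vector_Spaces.linear_compose[of "(*\<^sub>C)" "(*\<^sub>C)" g "(*\<^sub>C)" f] by (simp add: comp_def)

lemma finite_dim_iff_subset_span: "finite_dim A \<longleftrightarrow> (\<exists>F. finite F \<and> A \<subseteq> cvs.span F)"
proof -
  have "(\<forall>v\<in>A. \<exists>c. v = (\<Sum>f\<in>F. c f *\<^sub>C f)) \<longleftrightarrow> A \<subseteq> cvs.span F" if "finite F" for F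
    using that by (auto simp: cvs.span_finite)
  then show ?thesis
    unfolding finite_dim_def by blast
qed

lemma (in vector_space) finite_span_range_if_comp_and_kernel:
  assumes S: "Vector_Spaces.linear scale scale S" and T: "Vector_Spaces.linear scale scale T"
    and "finite F" "range (\<lambda>x. S (T x)) \<subseteq> span F"
    and "finite E" "{x. S x = 0} \<subseteq> span E"
  shows "\<exists>G. finite G \<and> range T \<subseteq> span G"
proof -
  interpret S: Vector_Spaces.linear scale scale S by (fact S)
  interpret T: Vector_Spaces.linear scale scale T by (fact T)
  have "Vector_Spaces.linear scale scale (\<lambda>x. S (T x))"
    using Vector_Spaces.linear_compose[OF T S] by (simp add: comp_def)
  then interpret ST: Vector_Spaces.linear scale scale "\<lambda>x. S (T x)" .
  obtain B where B: "B \<subseteq> range (\<lambda>x. S (T x))" "independent B" "range (\<lambda>x. S (T x)) \<subseteq> span B"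
    by (rule basis_exists)
  have "finite B"
    using independent_span_bound[OF \<open>finite F\<close> B(2) order_trans[OF B(1) assms(4)]] by (rule conjunct1)
  obtain X where X: "finite X" "B = (\<lambda>x. S (T x)) ` X"
    using finite_subset_image[OF \<open>finite B\<close> B(1)] by blast
  have "T x \<in> span (E \<union> T ` X)" for x
  proof -
    have "S (T x) \<in> (\<lambda>x. S (T x)) ` span X"
      using B(3) rangeI unfolding X(2) ST.span_image by (rule subsetD)
    then obtain z where z: "z \<in> span X" "S (T z) = S (T x)" by auto
    have "S (T x - T z) = 0"
      using z(2) by (simp add: S.diff)
    then have "T x - T z \<in> span E"
      using assms(6) by blast
    moreover have "T z \<in> span (T ` X)"
      using z(1) unfolding T.span_image by (rule imageI)
    ultimately have "T x - T z + T z \<in> span (E \<union> T ` X)"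
      using span_mono[of E "E \<union> T ` X"] span_mono[of "T ` X" "E \<union> T ` X"]
      by (intro span_add) auto
    then show ?thesis by simp
  qed
  then show ?thesis
    using \<open>finite E\<close> \<open>finite X\<close> by (intro exI[of _ "E \<union> T ` X"]) auto
qed

lemma cinner_add_left: "cinner (x + y) z = cinner x z + cinner y z"
  by (metis cinner_conj cinner_add_right complex_cnj_add)

lemma cinner_scaleC_left: "cinner (a *\<^sub>C x) y = cnj a * cinner x y"
  by (metis cinner_conj cinner_scaleC_right complex_cnj_mult)

lemma cinner_zero_right [simp]: "cinner x 0 = 0"
  using cinner_add_right[of x 0 0] by simp

lemma cinner_zero_left [simp]: "cinner 0 x = 0"
  using cinner_add_left[of 0 0 x] by simp

lemma cinner_diff_right: "cinner x (y - z) = cinner x y - cinner x z"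
  using cinner_add_right[of x "y - z" z] by simp

lemma cinner_diff_left: "cinner (x - y) z = cinner x z - cinner y z"
  using cinner_add_left[of "x - y" y z] by simp

lemma cinner_self_eq_zero [simp]: "cinner x x = 0 \<longleftrightarrow> x = 0"
  by (simp add: cinner_self)

lemma cinner_eqI: "(\<And>z. cinner z u = cinner z v) \<Longrightarrow> u = v"
  by (metis cinner_diff_right cinner_self_eq_zero eq_iff_diff_eq_0)

lemma cinner_span_eq_zero:
  assumes "\<forall>g\<in>G. cinner g w = 0" and "v \<in> cvs.span G"
  shows "cinner v w = 0"
  using assms(2)
proof (induction rule: cvs.span_induct_alt)
  case base
  then show ?case by simp
next
  case (step c x y)
  then show ?case
    using assms(1) by (simp add: cinner_add_left cinner_scaleC_left)
qed

text \<open>Gram--Schmidt step: correct \<open>m\<close> along the component \<open>g'\<close> of \<open>g\<close> orthogonal to \<open>span G\<close>.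
  If \<open>g' = 0\<close>, the coefficient is \<open>0 / 0 = 0\<close>, so no case distinction is needed.\<close>
lemma exists_orthogonal_projection_span:
  assumes "finite G"
  shows "\<exists>m\<in>cvs.span G. \<forall>g\<in>G. cinner g (y - m) = 0"
  using assms
proof (induction G arbitrary: y rule: finite_induct)
  case empty
  then show ?case
    using cvs.span_zero by blast
next
  case (insert g G)
  obtain m where m: "m \<in> cvs.span G" "\<forall>h\<in>G. cinner h (y - m) = 0"
    using insert.IH by blast
  obtain mg where mg: "mg \<in> cvs.span G" "\<forall>h\<in>G. cinner h (g - mg) = 0"
    using insert.IH by blast
  define g' where "g' = g - mg"
  define m' where "m' = m + (cinner g' (y - m) / cinner g' g') *\<^sub>C g'"
  have orth_G: "\<forall>h\<in>G. cinner h (y - m') = 0"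
    using m(2) mg(2) by (simp add: m'_def g'_def cinner_diff_right cinner_add_right cinner_scaleC_right)
  have "cinner g' (y - m') = 0"
    by (cases "g' = 0") (simp_all add: m'_def cinner_diff_right cinner_add_right cinner_scaleC_right)
  moreover have "cinner mg (y - m') = 0"
    using cinner_span_eq_zero[OF orth_G mg(1)] .
  ultimately have "cinner g (y - m') = 0"
    by (simp add: g'_def cinner_diff_left)
  moreover have "m' \<in> cvs.span (insert g G)"
    using m(1) mg(1) cvs.span_mono[of G "insert g G"] unfolding m'_def g'_def
    by (intro cvs.span_add cvs.span_scale cvs.span_diff) (auto intro: cvs.span_base)
  ultimately show ?case
    using orth_G by blast
qed

lemma is_adjoint_cinner_left:
  assumes "is_adjoint T S"
  shows "cinner (S x) y = cinner x (T y)"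
proof -
  have "cinner (S x) y = cnj (cinner y (S x))"
    by (rule cinner_conj)
  also have "\<dots> = cnj (cinner (T y) x)"
    using assms by (simp add: is_adjoint_def)
  finally show ?thesis
    by (simp add: cinner_conj[of x])
qed

lemma is_adjoint_clinear:
  assumes "is_adjoint T S"
  shows "clinear S"
proof -
  note adj = assms[unfolded is_adjoint_def, rule_format, symmetric]
  have "S (x + y) = S x + S y" for x y
    by (rule cinner_eqI) (simp add: adj cinner_add_right)
  moreover have "S (a *\<^sub>C x) = a *\<^sub>C S x" for a x
    by (rule cinner_eqI) (simp add: adj cinner_scaleC_right)
  ultimately show ?thesis
    by (simp add: clinear_op_iff_clinear[symmetric] clinear_op_def)
qed

lemma isometry_cinner:
  assumes "isometry V"
  shows "cinner (V x) (V y) = cinner x y"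
proof -
  have lin: "clinear V"
    using assms by (simp add: isometry_def clinear_op_iff_clinear)
  have self: "cinner (V x) (V x) = cinner x x" for x
    using assms by (simp add: isometry_def cinner_self)
  have sum: "cinner (V x) (V y) + cinner (V y) (V x) = cinner x y + cinner y x" for x y
    using self[of "x + y"] self[of x] self[of y]
    by (simp add: cvs.linear_add[OF lin] cinner_add_left cinner_add_right algebra_simps)
  have "\<i> * cinner (V x) (V y) - \<i> * cinner (V y) (V x) = \<i> * cinner x y - \<i> * cinner y x"
    using sum[of x "\<i> *\<^sub>C y"]
    by (simp add: cvs.linear_scale[OF lin] cinner_scaleC_left cinner_scaleC_right)
  then have "cinner (V x) (V y) - cinner (V y) (V x) = cinner x y - cinner y x"
    by (simp add: right_diff_distrib[symmetric])
  then have "(cinner (V x) (V y) - cinner (V y) (V x)) + (cinner (V x) (V y) + cinner (V y) (V x))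
      = (cinner x y - cinner y x) + (cinner x y + cinner y x)"
    using sum[of x y] by simp
  then show ?thesis
    by simp
qed

lemma isometry_adjoint_inverse:
  assumes "isometry V" "is_adjoint V Vs"
  shows "Vs (V x) = x"
  by (rule cinner_eqI) (simp add: assms(2)[unfolded is_adjoint_def, rule_format, symmetric]
      isometry_cinner[OF assms(1)])

lemma is_adjoint_commute:
  assumes "is_adjoint A As" "is_adjoint B Bs" "\<And>x. A (B x) = B (A x)"
  shows "As (Bs x) = Bs (As x)"
  by (rule cinner_eqI)
    (simp add: assms(1,2)[unfolded is_adjoint_def, rule_format, symmetric] assms(3))

lemma is_adjoint_cross_comm:
  assumes A: "is_adjoint A As" and B: "is_adjoint B Bs"
  shows "is_adjoint (cross_comm Bs A) (cross_comm As B)"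
  unfolding is_adjoint_def cross_comm_def
  by (simp add: cinner_diff_left cinner_diff_right
      A[unfolded is_adjoint_def] is_adjoint_cinner_left[OF A] is_adjoint_cinner_left[OF B])

lemma finite_rank_adjoint:
  assumes adj: "is_adjoint T S" and "finite_rank T"
  shows "finite_rank S"
proof -
  obtain G where G: "finite G" "range T \<subseteq> cvs.span G"
    using assms(2) by (auto simp: finite_rank_def finite_dim_iff_subset_span)
  have lin: "clinear S"
    using is_adjoint_clinear[OF adj] .
  have "S y \<in> cvs.span (S ` G)" for y
  proof -
    obtain m where m: "m \<in> cvs.span G" "\<forall>g\<in>G. cinner g (y - m) = 0"
      using exists_orthogonal_projection_span[OF G(1)] by blast
    have "cinner x (S (y - m)) = 0" for x
      using cinner_span_eq_zero[OF m(2), of "T x"] G(2) adj by (auto simp: is_adjoint_def)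
    then have "S y = S m"
      using cinner_eqI[of "S (y - m)" 0] by (simp add: cvs.linear_diff[OF lin])
    then show ?thesis
      using m(1) by (simp add: cvs.linear_span_image[OF lin])
  qed
  then show ?thesis
    using G(1) by (auto simp: finite_rank_def finite_dim_iff_subset_span)
qed

lemma finite_rank_comp_left:
  assumes "clinear S" "finite_rank T"
  shows "finite_rank (\<lambda>x. S (T x))"
proof -
  obtain G where G: "finite G" "range T \<subseteq> cvs.span G"
    using assms(2) by (auto simp: finite_rank_def finite_dim_iff_subset_span)
  then have "range (\<lambda>x. S (T x)) \<subseteq> cvs.span (S ` G)"
    by (auto simp: cvs.linear_span_image[OF assms(1)])
  then show ?thesis
    using G(1) by (auto simp: finite_rank_def finite_dim_iff_subset_span)
qed

lemma finite_rank_comp_right: "finite_rank T \<Longrightarrow> finite_rank (\<lambda>x. T (R x))"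
  by (auto simp: finite_rank_def finite_dim_def)

lemma finite_rank_add:
  assumes "finite_rank A" "finite_rank B"
  shows "finite_rank (\<lambda>x. A x + B x)"
proof -
  obtain F G where "finite F" "range A \<subseteq> cvs.span F" "finite G" "range B \<subseteq> cvs.span G"
    using assms by (auto simp: finite_rank_def finite_dim_iff_subset_span)
  then have "range (\<lambda>x. A x + B x) \<subseteq> cvs.span (F \<union> G)"
    using cvs.span_mono[of F "F \<union> G"] cvs.span_mono[of G "F \<union> G"]
    by (auto intro!: cvs.span_add)
  then show ?thesis
    using \<open>finite F\<close> \<open>finite G\<close> by (auto simp: finite_rank_def finite_dim_iff_subset_span)
qed

lemma finite_rank_if_comp_and_kernel:
  assumes "clinear S" "clinear T" "finite_rank (\<lambda>x. S (T x))" "finite_dim {x. S x = 0}"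
  shows "finite_rank T"
  using cvs.finite_span_range_if_comp_and_kernel[OF assms(1,2)] assms(3,4)
  by (auto simp: finite_rank_def finite_dim_iff_subset_span)

lemma clinear_defect_op:
  assumes lin: "clinear V1" "clinear V2" "clinear V1s" "clinear V2s"
  shows "clinear (defect_op V1 V2 V1s V2s)"
  unfolding defect_op_def
  by (rule cvs.linear_compose_add[OF cvs.linear_compose_sub[OF cvs.linear_compose_sub[OF
        cvs.linear_ident clinear_compose[OF lin(1,3)]] clinear_compose[OF lin(2,4)]]
        clinear_compose[OF lin(1) clinear_compose[OF lin(2) clinear_compose[OF lin(3,4)]]]])

lemma defect_op_square_minus_defect_op:
  assumes lin: "clinear V1" "clinear V2" "clinear V1s" "clinear V2s"
    and inv: "\<And>x. V1s (V1 x) = x" "\<And>x. V2s (V2 x) = x"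
    and comm: "\<And>x. V1 (V2 x) = V2 (V1 x)" "\<And>x. V1s (V2s x) = V2s (V1s x)"
  shows "defect_op V1 V2 V1s V2s (defect_op V1 V2 V1s V2s x) - defect_op V1 V2 V1s V2s x
    = V1 (cross_comm V1s V2 (V2s x - V1 (V1s (V2s x))))
      + V2 (cross_comm V2s V1 (V1s x) - V1 (V1s (cross_comm V2s V1 (V1s x))))"
proof -
  have "V1s (V2 (V1 x)) = V2 x" "V2s (V1s (V2 x)) = V1s x" for x
    by (simp_all only: comm(1)[symmetric] comm(2)[symmetric] inv)
  then show ?thesis
    unfolding defect_op_def cross_comm_def
    by (simp add: cvs.linear_add[OF lin(1)] cvs.linear_add[OF lin(2)] cvs.linear_add[OF lin(3)]
        cvs.linear_add[OF lin(4)] cvs.linear_diff[OF lin(1)] cvs.linear_diff[OF lin(2)]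
        cvs.linear_diff[OF lin(3)] cvs.linear_diff[OF lin(4)] cvs.linear_0[OF lin(1)]
        cvs.linear_0[OF lin(2)] inv comm algebra_simps)
qed

lemma finite_rank_defect_op_square_minus_defect_op:
  assumes lin: "clinear V1" "clinear V2" "clinear V1s" "clinear V2s"
    and inv: "\<And>x. V1s (V1 x) = x" "\<And>x. V2s (V2 x) = x"
    and comm: "\<And>x. V1 (V2 x) = V2 (V1 x)" "\<And>x. V1s (V2s x) = V2s (V1s x)"
    and fin: "finite_rank (cross_comm V2s V1)" "finite_rank (cross_comm V1s V2)"
  shows "finite_rank (\<lambda>x. defect_op V1 V2 V1s V2s (defect_op V1 V2 V1s V2s x)
    - defect_op V1 V2 V1s V2s x)"
proof -
  have V1_summand: "finite_rank (\<lambda>x. V1 (cross_comm V1s V2 (V2s x - V1 (V1s (V2s x)))))"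
    using finite_rank_comp_left[OF lin(1) finite_rank_comp_right[OF fin(2),
          of "\<lambda>x. V2s x - V1 (V1s (V2s x))"]] by simp
  have V2_summand: "finite_rank (\<lambda>x. V2 (cross_comm V2s V1 (V1s x) - V1 (V1s (cross_comm V2s V1 (V1s x)))))"
    using finite_rank_comp_left[OF clinear_compose[OF lin(2) cvs.linear_compose_sub[OF
          cvs.linear_ident clinear_compose[OF lin(1,3)]]] finite_rank_comp_right[OF fin(1), of V1s]]
    by simp
  show ?thesis
    using finite_rank_add[OF V1_summand V2_summand]
    by (simp only: defect_op_square_minus_defect_op[OF lin, OF inv comm])
qed

theorem corollary3p7:
  fixes V1 V2 V1s V2s :: "'a::complex_hilbert \<Rightarrow> 'a"
  assumes "separable_space TYPE('a)"
    and "isometric_pair V1 V2"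
    and "is_adjoint V1 V1s" and "is_adjoint V2 V2s"
    and "finite_dim {x. defect_op V1 V2 V1s V2s x = x}"
    and "finite_rank (cross_comm V2s V1)"
  shows "finite_rank (defect_op V1 V2 V1s V2s)"
proof -
  define C where "C = defect_op V1 V2 V1s V2s"
  have iso: "isometry V1" "isometry V2" and comm: "\<And>x. V1 (V2 x) = V2 (V1 x)"
    using assms(2) by (auto simp: isometric_pair_def fun_eq_iff)
  have lin: "clinear V1" "clinear V2" "clinear V1s" "clinear V2s"
    using iso assms(3,4) by (auto simp: isometry_def clinear_op_iff_clinear is_adjoint_clinear)
  have "finite_rank (\<lambda>x. C (C x) - C x)"
    unfolding C_def
    by (rule finite_rank_defect_op_square_minus_defect_op[OF lin, OF
          isometry_adjoint_inverse[OF iso(1) assms(3)] isometry_adjoint_inverse[OF iso(2) assms(4)]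
          comm is_adjoint_commute[OF assms(3,4), OF comm]
          assms(6) finite_rank_adjoint[OF is_adjoint_cross_comm[OF assms(3,4)] assms(6)]])
  moreover have "finite_dim {x. C x - x = 0}"
    using assms(5) by (simp add: C_def)
  ultimately show ?thesis
    using finite_rank_if_comp_and_kernel[of "\<lambda>x. C x - x" C] clinear_defect_op[OF lin]
    by (simp add: C_def cvs.linear_compose_sub cvs.linear_ident)
qed

end
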